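(* Let $G$ be a pseudoforest, let $\tau=\tau_A$ with $A=\binom{a\ b}{c\ d}$ be a 2-switch on $G$, and let $U$ and $U'$ be different unicyclic components of $G$ such that $ab\in E(\operatorname{Forest}(U))$ and $cd\in E(\operatorname{Forest}(U'))$. Then $\tau$ is a p-switch over $G$ if and only if $\tau'=\tau_{A'}$ with $A'=\binom{a\ b}{d\ c}$ is not a p-switch over $G$.
   Context: Graphs are finite, simple, undirected, labeled. A unicyclic graph is a connected graph with exactly one cycle; a pseudoforest is a graph each of whose components is a tree or a unicyclic graph. For vertices $a,b,c,d$, $A=\binom{a\ b}{c\ d}$ is interchangeable in $G$ if $ab,cd\in E(G)$, $\{a,b\}\cap\{c,d\}=\varnothing$, $ac,bd\notin E(G)$; the 2-switch $\tau_A$ sends $G$ to $G-ab-cd+ac+bd$ if $A$ is interchangeable and to $G$ otherwise (trivial). A nontrivial 2-switch $\tau$ over a pseudoforest $G$ is a p-switch if $\tau(G)$ is a pseudoforest. $\operatorname{Cycles}(H)$ is the subgraph induced by vertices lying on some cycle of $H$; $\operatorname{Forest}(H)=H-E(\operatorname{Cycles}(H))$. *)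

theory Defs
  imports Main
begin

definition simple_graph :: "'a set \<Rightarrow> 'a set set \<Rightarrow> bool" where
  "simple_graph V E \<longleftrightarrow> finite V \<and> (\<forall>e\<in>E. \<exists>x y. x \<noteq> y \<and> x \<in> V \<and> y \<in> V \<and> e = {x, y})"

definition adj :: "'a set set \<Rightarrow> 'a \<Rightarrow> 'a \<Rightarrow> bool" where
  "adj E x y \<longleftrightarrow> {x, y} \<in> E"

definition connected_graph :: "'a set \<Rightarrow> 'a set set \<Rightarrow> bool" where
  "connected_graph V E \<longleftrightarrow> V \<noteq> {} \<and> (\<forall>x\<in>V. \<forall>y\<in>V. (adj E)\<^sup>*\<^sup>* x y)"

text \<open>A cycle is given by a list of at least 3 distinct vertices, consecutive ones
  (cyclically) adjacent. As a subgraph it is determined by its edge set.\<close>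

definition is_cycle :: "'a set set \<Rightarrow> 'a list \<Rightarrow> bool" where
  "is_cycle E xs \<longleftrightarrow> length xs \<ge> 3 \<and> distinct xs \<and>
     (\<forall>i < length xs. {xs ! i, xs ! ((i + 1) mod length xs)} \<in> E)"

definition cycle_edges :: "'a list \<Rightarrow> 'a set set" where
  "cycle_edges xs = {{xs ! i, xs ! ((i + 1) mod length xs)} | i. i < length xs}"

definition cycles_of :: "'a set set \<Rightarrow> 'a set set set" where
  "cycles_of E = {cycle_edges xs | xs. is_cycle E xs}"

definition tree :: "'a set \<Rightarrow> 'a set set \<Rightarrow> bool" where
  "tree V E \<longleftrightarrow> connected_graph V E \<and> cycles_of E = {}"

definition unicyclic :: "'a set \<Rightarrow> 'a set set \<Rightarrow> bool" where
  "unicyclic V E \<longleftrightarrow> connected_graph V E \<and> card (cycles_of E) = 1"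

definition induced :: "'a set set \<Rightarrow> 'a set \<Rightarrow> 'a set set" where
  "induced E S = {e \<in> E. e \<subseteq> S}"

definition components :: "'a set \<Rightarrow> 'a set set \<Rightarrow> 'a set set" where
  "components V E = {{y \<in> V. (adj E)\<^sup>*\<^sup>* x y} | x. x \<in> V}"

definition pseudoforest :: "'a set \<Rightarrow> 'a set set \<Rightarrow> bool" where
  "pseudoforest V E \<longleftrightarrow> simple_graph V E \<and>
     (\<forall>C \<in> components V E. tree C (induced E C) \<or> unicyclic C (induced E C))"

text \<open>Vertices lying on some cycle; Cycles(H) is the subgraph induced by them,
  Forest(H) = H - E(Cycles(H)) has edge set given by forest_edges.\<close>
definition cycle_vertices :: "'a set set \<Rightarrow> 'a set" where
  "cycle_vertices E = {v. \<exists>xs. is_cycle E xs \<and> v \<in> set xs}"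

definition forest_edges :: "'a set set \<Rightarrow> 'a set set" where
  "forest_edges E = E - induced E (cycle_vertices E)"

definition interchangeable :: "'a set set \<Rightarrow> 'a \<Rightarrow> 'a \<Rightarrow> 'a \<Rightarrow> 'a \<Rightarrow> bool" where
  "interchangeable E a b c d \<longleftrightarrow> {a, b} \<in> E \<and> {c, d} \<in> E \<and> {a, b} \<inter> {c, d} = {}
     \<and> {a, c} \<notin> E \<and> {b, d} \<notin> E"

definition two_switch :: "'a set set \<Rightarrow> 'a \<Rightarrow> 'a \<Rightarrow> 'a \<Rightarrow> 'a \<Rightarrow> 'a set set" where
  "two_switch E a b c d =
     (if interchangeable E a b c d then (E - {{a, b}, {c, d}}) \<union> {{a, c}, {b, d}} else E)"

definition p_switch :: "'a set \<Rightarrow> 'a set set \<Rightarrow> 'a \<Rightarrow> 'a \<Rightarrow> 'a \<Rightarrow> 'a \<Rightarrow> bool" where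
  "p_switch V E a b c d \<longleftrightarrow> two_switch E a b c d \<noteq> E \<and> pseudoforest V (two_switch E a b c d)"

end

theory Submission
  imports Defs
begin

text \<open>The edges \<open>ab\<close> and \<open>cd\<close> lie on no cycle, so they are bridges: deleting both splits \<open>U\<close>
  into the side of \<open>a\<close> and the side of \<open>b\<close>, and \<open>U'\<close> into the sides of \<open>c\<close> and \<open>d\<close>, and the
  cycle of each component lies on one side. The new edges are bridges again, so a 2-switch of
  this kind keeps the set of cycles; \<open>\<tau>\<close> joins the side of \<open>a\<close> to that of \<open>c\<close> and the side
  of \<open>b\<close> to that of \<open>d\<close>, whereas \<open>\<tau>'\<close> pairs \<open>a\<close> with \<open>d\<close> and \<open>b\<close> with \<open>c\<close>. The result is a
  pseudoforest exactly when the two cycles stay in different components, and exactly one of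
  the two pairings keeps them apart.\<close>

section \<open>Reachability and connected components\<close>

abbreviation reachable :: "'a set set \<Rightarrow> 'a \<Rightarrow> 'a \<Rightarrow> bool" where
  "reachable F \<equiv> (adj F)\<^sup>*\<^sup>*"

lemma adj_commute: "adj F x y \<longleftrightarrow> adj F y x"
  by (simp add: adj_def insert_commute)

lemma reachable_sym: "reachable F x y \<Longrightarrow> reachable F y x"
  by (rule sympD[OF symp_rtranclp]) (simp add: sympI adj_commute)

lemma reachable_mono:
  assumes "reachable F x y" "F \<subseteq> F'"
  shows "reachable F' x y"
proof -
  have "adj F u v \<longrightarrow> adj F' u v" for u v
    using assms(2) by (auto simp: adj_def)
  from mono_rtranclp[OF this] show ?thesis
    using assms(1) ..
qed

lemma reachable_edge: "{x, y} \<in> F \<Longrightarrow> reachable F x y"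
  by (simp add: adj_def r_into_rtranclp)

lemma reachable_chain:
  "(\<And>i. i < n \<Longrightarrow> {f i, f (Suc i)} \<in> F) \<Longrightarrow> reachable F (f 0) (f n)"
  by (induction n) (auto simp: adj_def intro: rtranclp.rtrancl_into_rtrancl)

lemma reachable_insert_edge:
  "reachable (insert {x, y} F) u w \<longleftrightarrow>
     reachable F u w \<or> reachable F u x \<and> reachable F y w \<or> reachable F u y \<and> reachable F x w"
  (is "?lhs \<longleftrightarrow> ?rhs")
proof
  assume ?lhs
  then show ?rhs
  proof (induction rule: rtranclp_induct)
    case (step v w)
    from step.hyps(2) consider "{v, w} \<in> F" | "v = x" "w = y" | "v = y" "w = x"
      by (auto simp: adj_def doubleton_eq_iff)
    then show ?case
    proof cases
      case 1
      then have "reachable F v w" by (rule reachable_edge)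
      with step.IH show ?thesis
        by (meson rtranclp.rtrancl_into_rtrancl rtranclp_trans)
    qed (use step.IH in auto)
  qed simp
next
  let ?G = "insert {x, y} F"
  have G: "reachable ?G s t" if "reachable F s t" for s t
    using that by (rule reachable_mono) blast
  have xy: "reachable ?G x y" and yx: "reachable ?G y x"
    by (auto intro: reachable_edge simp: insert_commute)
  assume ?rhs
  then show ?lhs
    by (elim disjE conjE) (metis G xy yx rtranclp_trans)+
qed

lemma simple_graph_edge:
  assumes "simple_graph V F" "{u, v} \<in> F"
  shows "u \<in> V" "v \<in> V" "u \<noteq> v"
proof -
  obtain x y where "x \<noteq> y" "x \<in> V" "y \<in> V" "{u, v} = {x, y}"
    using assms unfolding simple_graph_def by blast
  then show "u \<in> V" "v \<in> V" "u \<noteq> v"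
    by (auto simp: doubleton_eq_iff)
qed

lemma simple_graph_edges_subset: "simple_graph V F \<Longrightarrow> e \<in> F \<Longrightarrow> e \<subseteq> V"
  unfolding simple_graph_def by fastforce

lemma simple_graph_finite_edges:
  assumes "simple_graph V F"
  shows "finite F"
proof (rule finite_subset)
  show "F \<subseteq> Pow V" using simple_graph_edges_subset[OF assms] by blast
  show "finite (Pow V)" using assms by (simp add: simple_graph_def)
qed

lemma reachable_in_vertices:
  "reachable F u v \<Longrightarrow> simple_graph V F \<Longrightarrow> u \<in> V \<Longrightarrow> v \<in> V"
  by (induction rule: rtranclp_induct) (auto simp: adj_def intro: simple_graph_edge(2))

lemma components_subset: "C \<in> components V F \<Longrightarrow> C \<subseteq> V"
  unfolding components_def by auto

lemma components_reachable:
  assumes "C \<in> components V F" "x \<in> C" "y \<in> C"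
  shows "reachable F x y"
proof -
  obtain z where "C = {y \<in> V. reachable F z y}"
    using assms(1) unfolding components_def by blast
  with assms(2,3) have "reachable F z x" "reachable F z y"
    by auto
  then show ?thesis
    by (blast intro: rtranclp_trans[OF reachable_sym])
qed

lemma components_closed:
  assumes "simple_graph V F" "C \<in> components V F" "x \<in> C" "reachable F x y"
  shows "y \<in> C"
proof -
  obtain z where C: "C = {y \<in> V. reachable F z y}" "z \<in> V"
    using assms(2) unfolding components_def by blast
  with assms(3) have "reachable F z x"
    by auto
  then have "reachable F z y"
    using assms(4) by (rule rtranclp_trans)
  with C assms(1) show ?thesis
    by (auto intro: reachable_in_vertices)
qed

lemma components_disjoint:
  assumes sg: "simple_graph V F" and C: "C \<in> components V F" and C': "C' \<in> components V F"
    and "C \<noteq> C'"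
  shows "C \<inter> C' = {}"
proof (rule ccontr)
  assume "C \<inter> C' \<noteq> {}"
  then obtain z where z: "z \<in> C" "z \<in> C'" by blast
  have "C \<subseteq> C'"
    using components_closed[OF sg C' z(2)] components_reachable[OF C z(1)] by blast
  moreover have "C' \<subseteq> C"
    using components_closed[OF sg C z(1)] components_reachable[OF C' z(2)] by blast
  ultimately show False using \<open>C \<noteq> C'\<close> by blast
qed

lemma reachable_induced:
  assumes "reachable F u v" "u \<in> C" and closed: "\<And>x y. {x, y} \<in> F \<Longrightarrow> x \<in> C \<Longrightarrow> y \<in> C"
  shows "reachable (induced F C) u v"
proof -
  from assms(1) have "reachable (induced F C) u v \<and> v \<in> C"
  proof (induction rule: rtranclp_induct)
    case (step y z)
    then have "{y, z} \<in> F" "y \<in> C" by (simp_all add: adj_def)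
    then have "z \<in> C" by (rule closed)
    with \<open>{y, z} \<in> F\<close> \<open>y \<in> C\<close> have "{y, z} \<in> induced F C"
      by (simp add: induced_def)
    with step.IH \<open>z \<in> C\<close> show ?case
      by (auto simp: adj_def intro: rtranclp.rtrancl_into_rtrancl)
  qed (simp add: assms(2))
  then show ?thesis ..
qed

lemma components_connected:
  assumes sg: "simple_graph V F" and C: "C \<in> components V F"
  shows "connected_graph C (induced F C)"
  unfolding connected_graph_def
proof (intro conjI ballI)
  show "C \<noteq> {}" using C unfolding components_def by auto
next
  fix x y assume "x \<in> C" "y \<in> C"
  then have xy: "reachable F x y" by (rule components_reachable[OF C])
  have closed: "v \<in> C" if "{u, v} \<in> F" "u \<in> C" for u v
    using components_closed[OF sg C \<open>u \<in> C\<close> reachable_edge[OF \<open>{u, v} \<in> F\<close>]] .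
  show "reachable (induced F C) x y"
    by (rule reachable_induced[OF xy \<open>x \<in> C\<close> closed])
qed

section \<open>Cycles and bridges\<close>

lemma cycle_edge:
  "is_cycle F xs \<Longrightarrow> i < length xs \<Longrightarrow> {xs ! i, xs ! ((i + 1) mod length xs)} \<in> F"
  by (simp add: is_cycle_def)

lemma hd_in_cycle: "is_cycle F xs \<Longrightarrow> hd xs \<in> set xs"
  by (rule hd_in_set) (auto simp: is_cycle_def)

lemma cycle_edges_subset: "is_cycle F xs \<Longrightarrow> cycle_edges xs \<subseteq> F"
  unfolding cycle_edges_def is_cycle_def by blast

lemma is_cycle_mono: "is_cycle F xs \<Longrightarrow> F \<subseteq> F' \<Longrightarrow> is_cycle F' xs"
  unfolding is_cycle_def by auto

lemma set_eq_Union_cycle_edges: "set xs = \<Union>(cycle_edges xs)"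
proof
  show "set xs \<subseteq> \<Union>(cycle_edges xs)"
  proof
    fix v assume "v \<in> set xs"
    then obtain i where "i < length xs" "v = xs ! i"
      by (auto simp: in_set_conv_nth)
    then show "v \<in> \<Union>(cycle_edges xs)"
      unfolding cycle_edges_def by auto
  qed
  show "\<Union>(cycle_edges xs) \<subseteq> set xs"
  proof
    fix v assume "v \<in> \<Union>(cycle_edges xs)"
    then obtain i where i: "i < length xs" and "v = xs ! i \<or> v = xs ! ((i + 1) mod length xs)"
      unfolding cycle_edges_def by auto
    moreover have "(i + 1) mod length xs < length xs"
      using i by (intro mod_less_divisor) linarith
    ultimately show "v \<in> set xs"
      by auto
  qed
qed

lemma set_eq_if_cycle_edges_eq: "cycle_edges xs = cycle_edges ys \<Longrightarrow> set xs = set ys"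
  by (simp add: set_eq_Union_cycle_edges[of xs] set_eq_Union_cycle_edges[of ys])

lemma is_cycle_induced: "is_cycle (induced F C) xs \<longleftrightarrow> is_cycle F xs \<and> set xs \<subseteq> C"
proof
  assume cyc: "is_cycle (induced F C) xs"
  have "\<Union>(cycle_edges xs) \<subseteq> C"
    using cycle_edges_subset[OF cyc] by (auto simp: induced_def)
  with cyc show "is_cycle F xs \<and> set xs \<subseteq> C"
    by (auto simp: is_cycle_def induced_def set_eq_Union_cycle_edges[symmetric])
next
  assume "is_cycle F xs \<and> set xs \<subseteq> C"
  moreover have "(i + 1) mod length xs < length xs" if "i < length xs" for i
    using that by (intro mod_less_divisor) linarith
  ultimately show "is_cycle (induced F C) xs"
    by (auto simp: is_cycle_def induced_def)
qed

lemma reachable_on_cycle: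
  assumes cyc: "is_cycle F xs" and "x \<in> set xs" "y \<in> set xs"
  shows "reachable F x y"
proof -
  have from_hd: "reachable F (xs ! 0) (xs ! i)" if i: "i < length xs" for i
  proof (rule reachable_chain[where f = "nth xs"])
    fix k assume "k < i"
    with i cycle_edge[OF cyc, of k] show "{xs ! k, xs ! Suc k} \<in> F"
      by simp
  qed
  obtain i j where "i < length xs" "x = xs ! i" "j < length xs" "y = xs ! j"
    using assms(2,3) by (auto simp: in_set_conv_nth)
  with from_hd show ?thesis
    by (metis reachable_sym rtranclp_trans)
qed

lemma cycle_edge_index_unique:
  assumes cyc: "is_cycle F xs" and k: "k < length xs" and i: "i < length xs"
    and eq: "{xs ! k, xs ! ((k + 1) mod length xs)} = {xs ! i, xs ! ((i + 1) mod length xs)}"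
  shows "k = i"
proof (rule ccontr)
  let ?n = "length xs"
  assume "k \<noteq> i"
  have n: "3 \<le> ?n" and "distinct xs"
    using cyc by (auto simp: is_cycle_def)
  then have index_eq: "l = l'" if "xs ! l = xs ! l'" "l < ?n" "l' < ?n" for l l'
    using that by (simp add: nth_eq_iff_index_eq)
  have "0 < ?n"
    using n by linarith
  then have "(k + 1) mod ?n < ?n" "(i + 1) mod ?n < ?n"
    by simp_all
  with eq \<open>k \<noteq> i\<close> k i have "k = (i + 1) mod ?n" "(k + 1) mod ?n = i"
    using index_eq by (auto simp: doubleton_eq_iff)
  then have "(i + 2) mod ?n = i mod ?n"
    using i by (simp add: mod_Suc_eq)
  then have "?n dvd 2"
    by (simp add: mod_eq_dvd_iff_nat)
  with n show False
    using dvd_imp_le[of ?n 2] by simp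
qed

text \<open>Going round the cycle the long way joins the two ends of any of its edges.\<close>

lemma cycle_edge_not_bridge:
  assumes cyc: "is_cycle F xs" and i: "i < length xs"
  defines "j \<equiv> (i + 1) mod length xs"
  shows "reachable (F - {{xs ! i, xs ! j}}) (xs ! j) (xs ! i)"
proof -
  let ?n = "length xs"
  have n: "3 \<le> ?n"
    using cyc by (simp add: is_cycle_def)
  then have "0 < ?n"
    by linarith
  define f where "f m = xs ! ((i + 1 + m) mod ?n)" for m
  have "{f m, f (Suc m)} \<in> F - {{xs ! i, xs ! j}}" if m: "m < ?n - 1" for m
  proof -
    define k where "k = (i + 1 + m) mod ?n"
    have k: "k < ?n"
      using \<open>0 < ?n\<close> by (simp add: k_def)
    have f_m: "f m = xs ! k" "f (Suc m) = xs ! ((k + 1) mod ?n)"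
      by (simp_all add: f_def k_def mod_Suc_eq)
    have "k \<noteq> i"
    proof
      assume "k = i"
      then have "(i + (m + 1)) mod ?n = i mod ?n"
        using i by (simp add: k_def ac_simps)
      then have "?n dvd m + 1"
        by (simp add: mod_eq_dvd_iff_nat)
      moreover have "m + 1 < ?n"
        using m by linarith
      ultimately show False
        using nat_dvd_not_less[of "m + 1" ?n] by simp
    qed
    then have "{xs ! k, xs ! ((k + 1) mod ?n)} \<noteq> {xs ! i, xs ! j}"
      using cycle_edge_index_unique[OF cyc k i] by (auto simp: j_def)
    with cycle_edge[OF cyc k] show ?thesis
      by (simp add: f_m)
  qed
  then have "reachable (F - {{xs ! i, xs ! j}}) (f 0) (f (?n - 1))"
    by (rule reachable_chain)
  moreover have "i + 1 + (?n - 1) = i + ?n"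
    using n by linarith
  ultimately show ?thesis
    using i by (simp add: f_def j_def)
qed

lemma is_cycle_remove_bridge:
  assumes cyc: "is_cycle F xs" and bridge: "\<not> reachable (F - {{u, v}}) u v"
  shows "is_cycle (F - {{u, v}}) xs"
proof -
  have "{xs ! i, xs ! ((i + 1) mod length xs)} \<in> F - {{u, v}}" if i: "i < length xs" for i
  proof -
    let ?j = "(i + 1) mod length xs"
    have "{xs ! i, xs ! ?j} \<noteq> {u, v}"
    proof
      assume e: "{xs ! i, xs ! ?j} = {u, v}"
      have "reachable (F - {{u, v}}) (xs ! ?j) (xs ! i)"
        using cycle_edge_not_bridge[OF cyc i] e by simp
      with e have "reachable (F - {{u, v}}) u v \<or> reachable (F - {{u, v}}) v u"
        by (auto simp: doubleton_eq_iff)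
      with bridge show False
        by (metis reachable_sym)
    qed
    with cycle_edge[OF cyc i] show ?thesis
      by simp
  qed
  with cyc show ?thesis
    by (simp add: is_cycle_def)
qed

lemma reachable_imp_distinct_path:
  "reachable F u v \<Longrightarrow>
     \<exists>p. p \<noteq> [] \<and> hd p = u \<and> last p = v \<and> distinct p \<and> successively (adj F) p"
proof (induction rule: converse_rtranclp_induct)
  case base
  show ?case
    by (rule exI[of _ "[v]"]) simp
next
  case (step u y)
  then obtain p where p: "p \<noteq> []" "hd p = y" "last p = v" "distinct p" "successively (adj F) p"
    by blast
  show ?case
  proof (cases "u \<in> set p")
    case True
    then obtain xs ys where "p = xs @ u # ys"
      by (meson split_list)
    with p show ?thesis
      by (intro exI[of _ "u # ys"]) (auto simp: successively_append_iff)
  next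
    case False
    with p step.hyps(1) show ?thesis
      by (intro exI[of _ "u # p"]) (auto simp: successively_Cons)
  qed
qed

lemma is_cycle_close_path:
  assumes walk: "successively (adj F) p" and "distinct p" and n: "3 \<le> length p"
    and closing: "{last p, hd p} \<in> F"
  shows "is_cycle F p"
  unfolding is_cycle_def
proof (intro conjI allI impI \<open>distinct p\<close> n)
  fix i assume i: "i < length p"
  show "{p ! i, p ! ((i + 1) mod length p)} \<in> F"
  proof (cases "Suc i < length p")
    case True
    with successively_nth[OF walk True] show ?thesis
      by (simp add: adj_def)
  next
    case False
    with i have "i = length p - 1" "i + 1 = length p"
      by simp_all
    moreover have "p \<noteq> []"
      using n by auto
    ultimately show ?thesis
      using closing by (simp add: last_conv_nth hd_conv_nth)
  qed
qed

lemma non_bridge_edge_on_cycle: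
  assumes ab: "{a, b} \<in> F" "a \<noteq> b" and "reachable (F - {{a, b}}) b a"
  shows "\<exists>xs. is_cycle F xs \<and> a \<in> set xs \<and> b \<in> set xs"
proof -
  obtain p where p: "p \<noteq> []" "hd p = b" "last p = a" "distinct p"
    and walk: "successively (adj (F - {{a, b}})) p"
    using reachable_imp_distinct_path[OF assms(3)] by blast
  let ?n = "length p"
  have p0: "p ! 0 = b" and pn: "p ! (?n - 1) = a"
    using p by (simp_all add: hd_conv_nth last_conv_nth)
  have "?n \<noteq> 0" "?n \<noteq> 1"
    using p(1) p0 pn ab(2) by auto
  moreover have "?n \<noteq> 2"
  proof
    assume "?n = 2"
    with walk have "adj (F - {{a, b}}) (p ! 0) (p ! 1)"
      using successively_nth[of _ p 0] by simp
    with p0 pn \<open>?n = 2\<close> show False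
      by (simp add: adj_def insert_commute)
  qed
  ultimately have "3 \<le> ?n"
    by linarith
  moreover have "successively (adj F) p"
    using walk by (rule successively_mono) (simp add: adj_def)
  moreover have "{last p, hd p} \<in> F"
    using p(2,3) ab(1) by (simp add: insert_commute)
  ultimately have "is_cycle F p"
    using is_cycle_close_path p(4) by blast
  moreover have "a \<in> set p" "b \<in> set p"
    using p(1-3) by (auto dest: last_in_set hd_in_set)
  ultimately show ?thesis
    by blast
qed

lemma forest_edge_is_bridge:
  assumes sg: "simple_graph V F" and C: "C \<in> components V F"
    and forest: "{a, b} \<in> forest_edges (induced F C)"
  shows "\<not> reachable (F - {{a, b}}) a b"
proof
  assume "reachable (F - {{a, b}}) a b"
  then have ba: "reachable (F - {{a, b}}) b a"
    by (rule reachable_sym)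
  have ab: "{a, b} \<in> induced F C" "b \<in> C"
    using forest by (auto simp: forest_edges_def induced_def)
  then have "a \<noteq> b"
    using simple_graph_edge(3)[OF sg] by (auto simp: induced_def)
  have closed: "y \<in> C" if "{x, y} \<in> F - {{a, b}}" "x \<in> C" for x y
    using components_closed[OF sg C \<open>x \<in> C\<close>] reachable_edge[of x y F] that by simp
  have "reachable (induced (F - {{a, b}}) C) b a"
    using reachable_induced[OF ba \<open>b \<in> C\<close> closed] .
  moreover have "induced (F - {{a, b}}) C = induced F C - {{a, b}}"
    by (auto simp: induced_def)
  ultimately obtain xs where "is_cycle (induced F C) xs" "a \<in> set xs" "b \<in> set xs"
    using non_bridge_edge_on_cycle[OF ab(1) \<open>a \<noteq> b\<close>] by auto
  then have "{a, b} \<in> induced (induced F C) (cycle_vertices (induced F C))"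
    using ab(1) by (auto simp: induced_def cycle_vertices_def)
  with forest show False
    by (simp add: forest_edges_def)
qed

section \<open>Pseudoforests\<close>

lemma finite_cycles_of: "finite F \<Longrightarrow> finite (cycles_of F)"
proof (rule finite_subset)
  show "cycles_of F \<subseteq> Pow F"
    unfolding cycles_of_def using cycle_edges_subset by blast
qed simp

lemma cycle_vertices_subset:
  assumes "simple_graph V F" "is_cycle F xs"
  shows "set xs \<subseteq> V"
proof -
  have "e \<subseteq> V" if "e \<in> cycle_edges xs" for e
    using simple_graph_edges_subset[OF assms(1)] cycle_edges_subset[OF assms(2)] that by auto
  then show ?thesis
    by (subst set_eq_Union_cycle_edges) auto
qed

lemma unicyclic_cycle_vertices:
  assumes "unicyclic C (induced F C)"
  shows "cycle_vertices F \<inter> C \<noteq> {}"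
proof -
  have "card (cycles_of (induced F C)) = 1"
    using assms by (simp add: unicyclic_def)
  then obtain X where "cycles_of (induced F C) = {X}"
    by (rule card_1_singletonE)
  then have "X \<in> cycles_of (induced F C)"
    by simp
  then obtain xs where "is_cycle (induced F C) xs"
    unfolding cycles_of_def by blast
  then have "is_cycle F xs" "set xs \<subseteq> C"
    by (simp_all add: is_cycle_induced)
  then have "hd xs \<in> cycle_vertices F \<inter> C"
    using hd_in_cycle by (auto simp: cycle_vertices_def)
  then show ?thesis
    by blast
qed

lemma pseudoforest_cycle_edges_eq:
  assumes pf: "pseudoforest V F" and cycles: "is_cycle F xs" "is_cycle F ys"
    and "x \<in> set xs" "y \<in> set ys" "reachable F x y"
  shows "cycle_edges xs = cycle_edges ys"
proof -
  have sg: "simple_graph V F"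
    using pf by (simp add: pseudoforest_def)
  define C where "C = {z \<in> V. reachable F x z}"
  have "x \<in> V"
    using cycle_vertices_subset[OF sg cycles(1)] \<open>x \<in> set xs\<close> by blast
  then have C: "C \<in> components V F"
    unfolding C_def components_def by blast
  have "set xs \<subseteq> C"
    using cycle_vertices_subset[OF sg cycles(1)] reachable_on_cycle[OF cycles(1) \<open>x \<in> set xs\<close>]
    by (auto simp: C_def)
  moreover have "set ys \<subseteq> C"
    using cycle_vertices_subset[OF sg cycles(2)] reachable_on_cycle[OF cycles(2) \<open>y \<in> set ys\<close>]
      rtranclp_trans[OF \<open>reachable F x y\<close>]
    by (auto simp: C_def)
  ultimately have in_cycles: "cycle_edges xs \<in> cycles_of (induced F C)"
    "cycle_edges ys \<in> cycles_of (induced F C)"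
    using cycles by (auto simp: cycles_of_def is_cycle_induced)
  then have "\<not> tree C (induced F C)"
    by (auto simp: tree_def)
  with pf C have "card (cycles_of (induced F C)) = 1"
    by (auto simp: pseudoforest_def unicyclic_def)
  then obtain Z where "cycles_of (induced F C) = {Z}"
    by (rule card_1_singletonE)
  with in_cycles show ?thesis
    by simp
qed

lemma pseudoforestI:
  assumes sg: "simple_graph V F"
    and unique: "\<And>xs ys x y. is_cycle F xs \<Longrightarrow> is_cycle F ys \<Longrightarrow> x \<in> set xs \<Longrightarrow> y \<in> set ys
      \<Longrightarrow> reachable F x y \<Longrightarrow> cycle_edges xs = cycle_edges ys"
  shows "pseudoforest V F"
  unfolding pseudoforest_def
proof (intro conjI ballI sg)
  fix C assume C: "C \<in> components V F"
  let ?Z = "cycles_of (induced F C)"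
  have fin: "finite ?Z"
    using simple_graph_finite_edges[OF sg]
    by (intro finite_cycles_of) (simp add: induced_def)
  have "X = Y" if "X \<in> ?Z" "Y \<in> ?Z" for X Y
  proof -
    obtain xs where X: "X = cycle_edges xs" and xs: "is_cycle F xs" "set xs \<subseteq> C"
      using \<open>X \<in> ?Z\<close> unfolding cycles_of_def is_cycle_induced by blast
    obtain ys where Y: "Y = cycle_edges ys" and ys: "is_cycle F ys" "set ys \<subseteq> C"
      using \<open>Y \<in> ?Z\<close> unfolding cycles_of_def is_cycle_induced by blast
    have "hd xs \<in> C" "hd ys \<in> C"
      using xs ys hd_in_cycle by auto
    then have "reachable F (hd xs) (hd ys)"
      by (rule components_reachable[OF C])
    with X Y show "X = Y"
      using unique[OF xs(1) ys(1) hd_in_cycle[OF xs(1)] hd_in_cycle[OF ys(1)]] by simp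
  qed
  then have "card ?Z \<le> 1"
    using card_le_Suc0_iff_eq[OF fin] by simp
  then have "?Z = {} \<or> card ?Z = 1"
    using fin by (auto simp: le_Suc_eq)
  then show "tree C (induced F C) \<or> unicyclic C (induced F C)"
    using components_connected[OF sg C] by (auto simp: tree_def unicyclic_def)
qed

section \<open>Two forest edges in distinct unicyclic components\<close>

locale forest_edge_pair =
  fixes V :: "'a set" and E :: "'a set set" and U U' :: "'a set" and a b c d :: 'a
  assumes pseudoforest: "pseudoforest V E"
    and U: "U \<in> components V E" and U': "U' \<in> components V E"
    and distinct_components: "U \<noteq> U'"
    and forest_ab: "{a, b} \<in> forest_edges (induced E U)"
    and forest_cd: "{c, d} \<in> forest_edges (induced E U')"
begin

abbreviation E0 :: "'a set set" where
  "E0 \<equiv> E - {{a, b}, {c, d}}"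

abbreviation E1 :: "'a set set" where
  "E1 \<equiv> insert {a, c} (insert {b, d} E0)"

lemma simple_E: "simple_graph V E"
  using pseudoforest by (simp add: pseudoforest_def)

lemma ab_edge: "{a, b} \<in> E" "a \<in> U" "b \<in> U"
  using forest_ab by (auto simp: forest_edges_def induced_def)

lemma cd_edge: "{c, d} \<in> E" "c \<in> U'" "d \<in> U'"
  using forest_cd by (auto simp: forest_edges_def induced_def)

lemma forest_edge_pair_swap: "forest_edge_pair V E U' U c d a b"
  by (rule forest_edge_pair.intro) (use pseudoforest U U' distinct_components forest_ab forest_cd in auto)

lemma not_reachable_across:
  assumes "x \<in> U" "y \<in> U'"
  shows "\<not> reachable E x y"
proof
  assume "reachable E x y"
  then have "y \<in> U"
    by (rule components_closed[OF simple_E U \<open>x \<in> U\<close>])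
  moreover have "U \<inter> U' = {}"
    by (rule components_disjoint[OF simple_E U U' distinct_components])
  ultimately show False
    using \<open>y \<in> U'\<close> by blast
qed

lemma not_reachable_E0_across:
  assumes "x \<in> U" "y \<in> U'"
  shows "\<not> reachable E0 x y" "\<not> reachable E0 y x"
proof -
  have "E0 \<subseteq> E" by blast
  then show "\<not> reachable E0 x y"
    using reachable_mono[of E0 x y E] not_reachable_across[OF assms] by blast
  then show "\<not> reachable E0 y x"
    using reachable_sym[of E0 y x] by blast
qed

lemma distinct_ends: "a \<noteq> b" "a \<noteq> c" "a \<noteq> d" "b \<noteq> c" "b \<noteq> d"
  using simple_graph_edge(3)[OF simple_E ab_edge(1)]
    not_reachable_across[OF ab_edge(2) cd_edge(2)] not_reachable_across[OF ab_edge(2) cd_edge(3)]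
    not_reachable_across[OF ab_edge(3) cd_edge(2)] not_reachable_across[OF ab_edge(3) cd_edge(3)]
  by auto

lemma new_edges_notin: "{a, c} \<notin> E" "{b, d} \<notin> E"
  using not_reachable_across[OF ab_edge(2) cd_edge(2)] not_reachable_across[OF ab_edge(3) cd_edge(3)]
    reachable_edge[of a c E] reachable_edge[of b d E]
  by auto

lemma bridges_E0: "\<not> reachable E0 a b" "\<not> reachable E0 c d"
proof -
  have "E0 \<subseteq> E - {{a, b}}" "E0 \<subseteq> E - {{c, d}}"
    by auto
  then show "\<not> reachable E0 a b" "\<not> reachable E0 c d"
    using forest_edge_is_bridge[OF simple_E U forest_ab] forest_edge_is_bridge[OF simple_E U' forest_cd]
      reachable_mono[of E0 a b] reachable_mono[of E0 c d]
    by blast+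
qed

lemma reachable_E0_sides:
  assumes "u \<in> U"
  shows "reachable E0 a u \<longleftrightarrow> \<not> reachable E0 b u"
proof -
  have cd_irrelevant: "reachable (insert {c, d} E0) z u \<longleftrightarrow> reachable E0 z u" if "z \<in> U" for z
    using reachable_insert_edge[of c d E0 z u]
      not_reachable_E0_across(1)[OF that cd_edge(2)] not_reachable_E0_across(1)[OF that cd_edge(3)]
    by blast
  have "E = insert {a, b} (insert {c, d} E0)"
    using ab_edge(1) cd_edge(1) by auto
  moreover have "reachable E a u"
    by (rule components_reachable[OF U ab_edge(2) assms])
  ultimately have "reachable (insert {a, b} (insert {c, d} E0)) a u"
    by (simp only:)
  then have "reachable (insert {c, d} E0) a u \<or> reachable (insert {c, d} E0) b u"
    unfolding reachable_insert_edge[of a b] by auto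
  then have "reachable E0 a u \<or> reachable E0 b u"
    using cd_irrelevant ab_edge(2,3) by blast
  moreover have "\<not> (reachable E0 a u \<and> reachable E0 b u)"
  proof
    assume "reachable E0 a u \<and> reachable E0 b u"
    then have "reachable E0 a b"
      using rtranclp_trans[of "adj E0" a u b] reachable_sym[of E0 b u] by blast
    with bridges_E0(1) show False ..
  qed
  ultimately show ?thesis
    by blast
qed

lemma E0_swap: "E - {{c, d}, {a, b}} = E0"
  by auto

lemma reachable_E0_sides': "w \<in> U' \<Longrightarrow> reachable E0 c w \<longleftrightarrow> \<not> reachable E0 d w"
  using forest_edge_pair.reachable_E0_sides[OF forest_edge_pair_swap] unfolding E0_swap .

lemma two_switch_eq: "two_switch E a b c d = E1"
proof -
  have "interchangeable E a b c d"
    unfolding interchangeable_def using ab_edge(1) cd_edge(1) distinct_ends new_edges_notin by auto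
  then show ?thesis
    by (auto simp: two_switch_def)
qed

lemma simple_E1: "simple_graph V E1"
proof -
  have "a \<in> V" "b \<in> V" "c \<in> V" "d \<in> V"
    using components_subset[OF U] components_subset[OF U'] ab_edge cd_edge by auto
  moreover have "\<exists>x y. x \<noteq> y \<and> x \<in> V \<and> y \<in> V \<and> e = {x, y}" if "e \<in> E" for e
    using simple_E that unfolding simple_graph_def by blast
  ultimately show ?thesis
    using simple_E distinct_ends unfolding simple_graph_def by auto
qed

lemma is_cycle_E0: "is_cycle E xs \<Longrightarrow> is_cycle E0 xs"
proof -
  assume "is_cycle E xs"
  then have "is_cycle (E - {{a, b}}) xs"
    by (rule is_cycle_remove_bridge[OF _ forest_edge_is_bridge[OF simple_E U forest_ab]])
  moreover have "E - {{a, b}} - {{c, d}} = E0"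
    by auto
  ultimately show "is_cycle E0 xs"
    using is_cycle_remove_bridge[of "E - {{a, b}}" xs c d] bridges_E0(2) by simp
qed

lemma is_cycle_E1_iff: "is_cycle E1 xs \<longleftrightarrow> is_cycle E xs"
proof
  assume "is_cycle E xs"
  then show "is_cycle E1 xs"
    using is_cycle_E0 is_cycle_mono[of E0 xs E1] by blast
next
  assume cyc: "is_cycle E1 xs"
  have "E1 - {{a, c}} = insert {b, d} E0"
    using new_edges_notin distinct_ends by (auto simp: doubleton_eq_iff)
  moreover have "\<not> reachable (insert {b, d} E0) a c"
    unfolding reachable_insert_edge
    using not_reachable_E0_across[OF ab_edge(2) cd_edge(2)] not_reachable_E0_across[OF ab_edge(2) cd_edge(3)] bridges_E0(1)
    by blast
  ultimately have "is_cycle (insert {b, d} E0) xs"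
    using is_cycle_remove_bridge[OF cyc, of a c] by simp
  moreover have "insert {b, d} E0 - {{b, d}} = E0"
    using new_edges_notin by auto
  ultimately have "is_cycle E0 xs"
    using is_cycle_remove_bridge[of "insert {b, d} E0" xs b d] not_reachable_E0_across(1)[OF ab_edge(3) cd_edge(3)]
    by simp
  then show "is_cycle E xs"
    by (rule is_cycle_mono) blast
qed

lemma reachable_E1_across:
  assumes u: "u \<in> U" and w: "w \<in> U'"
  shows "reachable E1 u w \<longleftrightarrow>
    reachable E0 a u \<and> reachable E0 c w \<or> reachable E0 b u \<and> reachable E0 d w"
proof -
  let ?F = "insert {b, d} E0"
  note across = not_reachable_E0_across
  have F_U: "reachable ?F x y \<longleftrightarrow> reachable E0 x y" if "x \<in> U" "y \<in> U" for x y
    unfolding reachable_insert_edge using across[OF that(1) cd_edge(3)] across[OF that(2) cd_edge(3)] by simp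
  have F_U': "reachable ?F x y \<longleftrightarrow> reachable E0 x y" if "x \<in> U'" "y \<in> U'" for x y
    unfolding reachable_insert_edge using across[OF ab_edge(3) that(1)] across[OF ab_edge(3) that(2)] by simp
  have F_across: "reachable ?F x y \<longleftrightarrow> reachable E0 x b \<and> reachable E0 d y"
    if "x \<in> U" "y \<in> U'" for x y
    unfolding reachable_insert_edge using across[OF that] across[OF that(1) cd_edge(3)] by simp
  have "\<not> reachable E0 d c"
    using bridges_E0(2) reachable_sym by metis
  then have "reachable E1 u w \<longleftrightarrow> reachable E0 u b \<and> reachable E0 d w \<or> reachable E0 u a \<and> reachable E0 c w"
    unfolding reachable_insert_edge[of a c ?F]
    using F_U[OF u ab_edge(2)] F_U'[OF cd_edge(2) w] F_across[OF u w] F_across[OF u cd_edge(2)] by simp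
  moreover have "reachable E0 u a \<longleftrightarrow> reachable E0 a u" "reachable E0 u b \<longleftrightarrow> reachable E0 b u"
    using reachable_sym by metis+
  ultimately show ?thesis
    by blast
qed

lemma reachable_E1_outside:
  assumes xy: "reachable E1 x y" and x: "x \<notin> U" "x \<notin> U'"
  shows "reachable E x y"
proof -
  let ?G = "insert {b, d} E"
  have far: "\<not> reachable E x z" if "z \<in> U \<or> z \<in> U'" for z
  proof
    assume "reachable E x z"
    then have "reachable E z x"
      by (rule reachable_sym)
    then have "x \<in> U \<or> x \<in> U'"
      using that components_closed[OF simple_E U, of z x] components_closed[OF simple_E U', of z x] by blast
    with x show False
      by blast
  qed
  have G: "reachable ?G x z \<longleftrightarrow> reachable E x z" for z
    unfolding reachable_insert_edge using far[of b] far[of d] ab_edge(3) cd_edge(3) by simp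
  have "reachable (insert {a, c} ?G) x y"
    using xy by (rule reachable_mono) blast
  then show ?thesis
    unfolding reachable_insert_edge[of a c ?G] G using far[of a] far[of c] ab_edge(2) cd_edge(2) by simp
qed

lemma new_connection_across:
  assumes xy: "reachable E1 x y" and not_xy: "\<not> reachable E x y"
  shows "x \<in> U \<and> y \<in> U' \<or> x \<in> U' \<and> y \<in> U"
proof -
  have "x \<in> U \<or> x \<in> U'"
    using reachable_E1_outside[OF xy] not_xy by blast
  moreover have "y \<in> U \<or> y \<in> U'"
  proof (rule ccontr)
    assume "\<not> (y \<in> U \<or> y \<in> U')"
    then have "reachable E y x"
      using reachable_E1_outside[OF reachable_sym[OF xy]] by blast
    with not_xy show False
      using reachable_sym[of E y x] by blast
  qed
  moreover have "\<not> (x \<in> U \<and> y \<in> U)" "\<not> (x \<in> U' \<and> y \<in> U')"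
    using components_reachable[OF U, of x y] components_reachable[OF U', of x y] not_xy by auto
  ultimately show ?thesis
    by blast
qed

lemma cycle_vertices_reachable:
  assumes C: "C \<in> components V E" and x: "x \<in> cycle_vertices E \<inter> C" and y: "y \<in> cycle_vertices E \<inter> C"
  shows "reachable E0 x y"
proof -
  obtain xs ys where xs: "is_cycle E xs" "x \<in> set xs" and ys: "is_cycle E ys" "y \<in> set ys"
    using x y by (auto simp: cycle_vertices_def)
  have "x \<in> C" "y \<in> C"
    using x y by simp_all
  then have "reachable E x y"
    by (rule components_reachable[OF C])
  then have "cycle_edges xs = cycle_edges ys"
    by (rule pseudoforest_cycle_edges_eq[OF pseudoforest xs(1) ys(1) xs(2) ys(2)])
  then have "y \<in> set xs"
    using set_eq_if_cycle_edges_eq ys(2) by blast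
  then show ?thesis
    by (rule reachable_on_cycle[OF is_cycle_E0[OF xs(1)] xs(2)])
qed

lemma new_connection_joins_cycles:
  assumes p: "p \<in> cycle_vertices E \<inter> U" and q: "q \<in> cycle_vertices E \<inter> U'"
    and x: "x \<in> cycle_vertices E" and y: "y \<in> cycle_vertices E"
    and xy: "reachable E1 x y" and not_xy: "\<not> reachable E x y"
  shows "reachable E1 p q"
proof -
  have E0_E1: "reachable E1 s t" if "reachable E0 s t" for s t
    using that by (rule reachable_mono) blast
  from new_connection_across[OF xy not_xy] show ?thesis
  proof (elim disjE conjE)
    assume "x \<in> U" "y \<in> U'"
    with x y have "reachable E0 p x" "reachable E0 y q"
      using cycle_vertices_reachable[OF U p, of x] cycle_vertices_reachable[OF U' _ q, of y]
      by simp_all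
    then show ?thesis
      using rtranclp_trans[OF rtranclp_trans[OF E0_E1 xy] E0_E1] by blast
  next
    assume "x \<in> U'" "y \<in> U"
    with x y have "reachable E0 p y" "reachable E0 x q"
      using cycle_vertices_reachable[OF U p, of y] cycle_vertices_reachable[OF U' _ q, of x]
      by simp_all
    then show ?thesis
      using rtranclp_trans[OF rtranclp_trans[OF E0_E1 reachable_sym[OF xy]] E0_E1] by blast
  qed
qed

lemma pseudoforest_E1_iff:
  assumes p: "p \<in> cycle_vertices E \<inter> U" and q: "q \<in> cycle_vertices E \<inter> U'"
  shows "pseudoforest V E1 \<longleftrightarrow> \<not> reachable E1 p q"
proof
  assume pf1: "pseudoforest V E1"
  show "\<not> reachable E1 p q"
  proof
    assume pq: "reachable E1 p q"
    obtain xs ys where xs: "is_cycle E xs" "p \<in> set xs" and ys: "is_cycle E ys" "q \<in> set ys"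
      using p q by (auto simp: cycle_vertices_def)
    have "cycle_edges xs = cycle_edges ys"
      using pseudoforest_cycle_edges_eq[OF pf1 _ _ xs(2) ys(2) pq] xs(1) ys(1)
      by (simp add: is_cycle_E1_iff)
    then have "p \<in> set ys"
      using set_eq_if_cycle_edges_eq xs(2) by blast
    then have "reachable E p q"
      by (rule reachable_on_cycle[OF ys(1) _ ys(2)])
    with p q show False
      using not_reachable_across[of p q] by blast
  qed
next
  assume not_pq: "\<not> reachable E1 p q"
  show "pseudoforest V E1"
  proof (rule pseudoforestI[OF simple_E1])
    fix xs ys x y
    assume "is_cycle E1 xs" "is_cycle E1 ys" and x: "x \<in> set xs" and y: "y \<in> set ys"
      and xy: "reachable E1 x y"
    then have xs: "is_cycle E xs" and ys: "is_cycle E ys"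
      by (simp_all add: is_cycle_E1_iff)
    have "x \<in> cycle_vertices E" "y \<in> cycle_vertices E"
      using xs ys x y by (auto simp: cycle_vertices_def)
    with not_pq have "reachable E x y"
      using new_connection_joins_cycles[OF p q _ _ xy] by blast
    then show "cycle_edges xs = cycle_edges ys"
      by (rule pseudoforest_cycle_edges_eq[OF pseudoforest xs ys x y])
  qed
qed

lemma p_switch_iff_sides:
  assumes p: "p \<in> cycle_vertices E \<inter> U" and q: "q \<in> cycle_vertices E \<inter> U'"
  shows "p_switch V E a b c d \<longleftrightarrow>
    \<not> (reachable E0 a p \<and> reachable E0 c q \<or> reachable E0 b p \<and> reachable E0 d q)"
proof -
  have "E1 \<noteq> E"
    using new_edges_notin by blast
  then have "p_switch V E a b c d \<longleftrightarrow> \<not> reachable E1 p q"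
    unfolding p_switch_def two_switch_eq using pseudoforest_E1_iff[OF p q] by blast
  moreover have "p \<in> U" "q \<in> U'"
    using p q by simp_all
  ultimately show ?thesis
    using reachable_E1_across[of p q] by simp
qed

end

theorem lemma4p6:
  fixes V :: "'a set" and E :: "'a set set" and U U' :: "'a set" and a b c d :: 'a
  assumes "pseudoforest V E"
    and "U \<in> components V E" and "U' \<in> components V E" and "U \<noteq> U'"
    and "unicyclic U (induced E U)" and "unicyclic U' (induced E U')"
    and "{a, b} \<in> forest_edges (induced E U)"
    and "{c, d} \<in> forest_edges (induced E U')"
  shows "p_switch V E a b c d \<longleftrightarrow> \<not> p_switch V E a b d c"
proof -
  interpret forest_edge_pair V E U U' a b c d
    by (rule forest_edge_pair.intro) (fact assms)+
  interpret swapped: forest_edge_pair V E U U' a b d c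
    by (rule forest_edge_pair.intro) (use assms in \<open>simp_all add: insert_commute\<close>)
  obtain p q where p: "p \<in> cycle_vertices E \<inter> U" and q: "q \<in> cycle_vertices E \<inter> U'"
    using unicyclic_cycle_vertices[OF assms(5)] unicyclic_cycle_vertices[OF assms(6)] by blast
  have E0_swapped: "E - {{a, b}, {d, c}} = E0"
    by (simp add: insert_commute)
  have "p_switch V E a b c d \<longleftrightarrow>
      \<not> (reachable E0 a p \<and> reachable E0 c q \<or> reachable E0 b p \<and> reachable E0 d q)"
    by (rule p_switch_iff_sides[OF p q])
  moreover have "p_switch V E a b d c \<longleftrightarrow>
      \<not> (reachable E0 a p \<and> reachable E0 d q \<or> reachable E0 b p \<and> reachable E0 c q)"
    using swapped.p_switch_iff_sides[OF p q] unfolding E0_swapped .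
  moreover have "reachable E0 a p \<longleftrightarrow> \<not> reachable E0 b p"
    using p by (simp add: reachable_E0_sides)
  moreover have "reachable E0 c q \<longleftrightarrow> \<not> reachable E0 d q"
    using q by (simp add: reachable_E0_sides')
  ultimately show ?thesis
    by blast
qed

end
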